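(* For a set $A\subset\mathbb{R}^2\times\mathbb{R}^2$ the following conditions are equivalent: (i) for all $(x^0,y^0),(x^1,y^1)\in A$, $$(1-t)c(x^0,y^0)+t\,c(x^1,y^1)\le t(1-t)\,c(y^0,y^1),\qquad t\in[0,1];$$ (ii) there is $G\in\mathfrak{M}$ such that $c(x,y)\le\phi_G(y)$ for all $(x,y)\in A$.
   Context: $c(x,y)=(x_1-y_1)(x_2-y_2)$ for $x,y\in\mathbb{R}^2$. A set $G\subset\mathbb{R}^2$ is monotone if $c(r,s)\ge0$ for all $r,s\in G$, maximal monotone if it is not a proper subset of a monotone set; $\mathfrak{M}$ is the family of maximal monotone sets. $\phi_G(y)=\inf_{x\in G}c(x,y)$. *)

theory Defs
  imports "HOL-Analysis.Analysis" "HOL-Library.Extended_Real"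
begin

definition cost :: "real \<times> real \<Rightarrow> real \<times> real \<Rightarrow> real" where
  "cost x y = (fst x - fst y) * (snd x - snd y)"

definition monotone_set :: "(real \<times> real) set \<Rightarrow> bool" where
  "monotone_set G \<longleftrightarrow> (\<forall>r\<in>G. \<forall>s\<in>G. cost r s \<ge> 0)"

definition maximal_monotone :: "(real \<times> real) set \<Rightarrow> bool" where
  "maximal_monotone G \<longleftrightarrow> monotone_set G \<and> (\<forall>H. monotone_set H \<and> G \<subseteq> H \<longrightarrow> H = G)"

text \<open>phi_G(y) = inf over x in G of c(x,y), taken in the extended reals
  (it may be -infinity, and is +infinity for empty G).\<close>
definition phi :: "(real \<times> real) set \<Rightarrow> real \<times> real \<Rightarrow> ereal" where
  "phi G y = (INF x\<in>G. ereal (cost x y))"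

end

theory Submission
  imports Defs
begin

text \<open>In the rotated coordinates \<open>u = y\<^sub>1 + y\<^sub>2\<close>, \<open>v = y\<^sub>2 - y\<^sub>1\<close> the cost is
  \<open>c(a,b) = ((\<Delta>u)\<^sup>2 - (\<Delta>v)\<^sup>2)/4\<close>, so the graph \<open>v = h(u)\<close> of a 1-Lipschitz \<open>h\<close> is maximal monotone.

  (ii) \<open>\<Longrightarrow>\<close> (i): by maximality some \<open>g \<in> G\<close> has \<open>c(g,y\<^sub>t) \<le> 0\<close> at \<open>y\<^sub>t = (1-t)y\<^sup>0 + t y\<^sup>1\<close>, and
  \<open>c(g,y\<^sub>t) = (1-t)c(g,y\<^sup>0) + t c(g,y\<^sup>1) - t(1-t)c(y\<^sup>0,y\<^sup>1)\<close> with \<open>c(x\<^sup>i,y\<^sup>i) \<le> c(g,y\<^sup>i)\<close>.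

  (i) \<open>\<Longrightarrow>\<close> (ii): put \<open>b = -4c(x,y) \<ge> 0\<close>. A graph satisfies \<open>c(x,y) \<le> \<phi>\<^sub>G(y)\<close> iff it stays in
  the region \<open>|v - v\<^sub>y| \<le> sqrt((u - u\<^sub>y)\<^sup>2 + b)\<close>. Optimising (i) over \<open>t\<close> gives
  \<open>(\<Delta>v)\<^sup>2 - (\<Delta>u)\<^sup>2 \<le> (sqrt b\<^sup>0 + sqrt b\<^sup>1)\<^sup>2\<close>, and with the triangle inequality in the plane this
  says that every lower boundary \<open>v\<^sub>j - sqrt(\<dots>)\<close> lies below every upper boundary \<open>v\<^sub>k + sqrt(\<dots>)\<close>.
  The infimum of the upper boundaries is then a suitable 1-Lipschitz \<open>h\<close>.\<close>

definition ucoord :: "real \<times> real \<Rightarrow> real" where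
  "ucoord y = fst y + snd y"

definition vcoord :: "real \<times> real \<Rightarrow> real" where
  "vcoord y = snd y - fst y"

lemma cost_rotated: "cost a b = ((ucoord a - ucoord b)\<^sup>2 - (vcoord a - vcoord b)\<^sup>2) / 4"
  unfolding cost_def ucoord_def vcoord_def by (simp add: power2_eq_square algebra_simps)

lemma cost_commute: "cost a b = cost b a"
  unfolding cost_def by (simp add: algebra_simps)

lemma cost_convex_combination:
  "cost g ((1 - t) *\<^sub>R y0 + t *\<^sub>R y1) = (1 - t) * cost g y0 + t * cost g y1 - t * (1 - t) * cost y0 y1"
  unfolding cost_def by (simp add: algebra_simps)

lemma ereal_le_phi_iff: "ereal r \<le> phi G y \<longleftrightarrow> (\<forall>g\<in>G. r \<le> cost g y)"
  unfolding phi_def by (simp add: le_INF_iff)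

lemma maximal_monotone_ex_cost_nonpos:
  assumes "maximal_monotone G"
  obtains g where "g \<in> G" "cost g y \<le> 0"
proof (rule ccontr)
  assume "\<not> thesis"
  with that have pos: "\<forall>g\<in>G. 0 < cost g y" by force
  moreover have "\<forall>g\<in>G. 0 < cost y g" using pos cost_commute by metis
  moreover have yy: "cost y y = 0" by (simp add: cost_def)
  ultimately have "monotone_set (insert y G)"
    using assms unfolding maximal_monotone_def monotone_set_def by (auto intro: less_imp_le)
  then have "y \<in> G" using assms unfolding maximal_monotone_def by blast
  with pos yy show False by fastforce
qed

lemma maximal_monotone_graph:
  assumes "1-lipschitz_on UNIV h"
  shows "maximal_monotone {g. vcoord g = h (ucoord g)}" (is "maximal_monotone ?G")
  unfolding maximal_monotone_def
proof (intro conjI allI impI)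
  show "monotone_set ?G" unfolding monotone_set_def
  proof (intro ballI)
    fix r s assume "r \<in> ?G" "s \<in> ?G"
    then have "\<bar>vcoord r - vcoord s\<bar> \<le> \<bar>ucoord r - ucoord s\<bar>"
      using lipschitz_onD[OF assms] by (simp add: dist_real_def)
    then show "0 \<le> cost r s" by (simp add: cost_rotated abs_le_square_iff)
  qed
  fix H assume H: "monotone_set H \<and> ?G \<subseteq> H"
  have "p \<in> ?G" if "p \<in> H" for p
  proof -
    define q where "q = ((ucoord p - h (ucoord p)) / 2, (ucoord p + h (ucoord p)) / 2)"
    have uq: "ucoord q = ucoord p" and vq: "vcoord q = h (ucoord p)"
      unfolding q_def ucoord_def vcoord_def by (simp_all add: field_simps)
    then have "q \<in> H" using H by auto
    with H \<open>p \<in> H\<close> have "0 \<le> cost p q" unfolding monotone_set_def by blast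
    then have "vcoord p = vcoord q" using uq by (simp add: cost_rotated)
    with vq show ?thesis by simp
  qed
  with H show "H = ?G" by blast
qed

lemma cost_le_cost_if_in_cone:
  assumes "cost x y \<le> 0"
    and "\<bar>vcoord g - vcoord y\<bar> \<le> sqrt ((ucoord g - ucoord y)\<^sup>2 - 4 * cost x y)"
  shows "cost x y \<le> cost g y"
proof -
  have "0 \<le> (ucoord g - ucoord y)\<^sup>2 - 4 * cost x y"
    using assms(1) zero_le_power2[of "ucoord g - ucoord y"] by linarith
  moreover have "(vcoord g - vcoord y)\<^sup>2 \<le> (sqrt ((ucoord g - ucoord y)\<^sup>2 - 4 * cost x y))\<^sup>2"
    using assms(2) by (metis abs_ge_zero power2_abs power_mono)
  ultimately show ?thesis using cost_rotated[of g y] by simp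
qed

lemma le_square_sqrt_add_sqrt:
  fixes K b0 b1 :: real
  assumes "0 \<le> b0" "0 \<le> b1"
    and bound: "\<And>t. 0 \<le> t \<Longrightarrow> t \<le> 1 \<Longrightarrow> t * (1 - t) * K \<le> (1 - t) * b0 + t * b1"
  shows "K \<le> (sqrt b0 + sqrt b1)\<^sup>2"
proof (rule ccontr)
  define s0 s1 r where "s0 = sqrt b0" and "s1 = sqrt b1" and "r = sqrt K"
  have s: "0 \<le> s0" "0 \<le> s1" "s0\<^sup>2 = b0" "s1\<^sup>2 = b1"
    using assms(1,2) by (simp_all add: s0_def s1_def)
  assume "\<not> ?thesis"
  then have K: "(s0 + s1)\<^sup>2 < K" by (simp add: s0_def s1_def)
  then have "s0 + s1 < r" using real_less_rsqrt by (simp add: r_def)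
  have "r\<^sup>2 = K" using K zero_le_power2[of "s0 + s1"] unfolding r_def by (intro real_sqrt_pow2) linarith
  \<comment> \<open>split \<open>r = a + c\<close> with \<open>a > s0\<close>, \<open>c > s1\<close> and test the bound at \<open>t = a / r\<close>\<close>
  define a c where "a = (r + s0 - s1) / 2" and "c = (r - s0 + s1) / 2"
  have ac: "s0 < a" "s1 < c" "r = a + c" using \<open>s0 + s1 < r\<close> by (auto simp: a_def c_def field_simps)
  have "s0\<^sup>2 * c + s1\<^sup>2 * a < a\<^sup>2 * c + c\<^sup>2 * a"
    using ac s by (intro add_strict_mono mult_strict_right_mono power_strict_mono) auto
  also have "\<dots> = a * c * r" by (simp add: ac(3) power2_eq_square algebra_simps)
  finally have less: "s0\<^sup>2 * c + s1\<^sup>2 * a < a * c * r" .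
  have "0 < r" using ac s by linarith
  have complement: "1 - a / r = c / r" using \<open>0 < r\<close> ac(3) by (simp add: field_simps)
  have "(1 - a / r) * b0 + a / r * b1 = (s0\<^sup>2 * c + s1\<^sup>2 * a) / r"
    unfolding complement using s by (simp add: add_divide_distrib algebra_simps)
  also have "\<dots> < a * c" using less \<open>0 < r\<close> by (simp add: pos_divide_less_eq)
  also have "a * c = a / r * (1 - a / r) * K"
    unfolding complement \<open>r\<^sup>2 = K\<close>[symmetric] using \<open>0 < r\<close> by (simp add: power2_eq_square)
  finally have "(1 - a / r) * b0 + a / r * b1 < a / r * (1 - a / r) * K" .
  moreover have "0 \<le> a / r" "a / r \<le> 1" using ac s by simp_all
  ultimately show False using bound by fastforce
qed

lemma cone_separation:
  fixes b0 b1 :: real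
  assumes "0 \<le> b0" "0 \<le> b1"
    and bound: "\<And>t. 0 \<le> t \<Longrightarrow> t \<le> 1 \<Longrightarrow>
      t * (1 - t) * ((v1 - v0)\<^sup>2 - (u1 - u0)\<^sup>2) \<le> (1 - t) * b0 + t * b1"
  shows "v1 - sqrt ((u - u1)\<^sup>2 + b1) \<le> v0 + sqrt ((u - u0)\<^sup>2 + b0)"
proof -
  have "v1 - v0 \<le> sqrt ((v1 - v0)\<^sup>2)" by simp
  also have "\<dots> \<le> sqrt ((u1 - u0)\<^sup>2 + (sqrt b0 + sqrt b1)\<^sup>2)"
    using le_square_sqrt_add_sqrt[OF assms] by (intro real_sqrt_le_mono) linarith
  also have "\<dots> \<le> sqrt ((u - u0)\<^sup>2 + (sqrt b0)\<^sup>2) + sqrt ((u1 - u)\<^sup>2 + (sqrt b1)\<^sup>2)"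
    using real_sqrt_sum_squares_triangle_ineq[where a = "u - u0" and c = "u1 - u"] by simp
  also have "\<dots> = sqrt ((u - u0)\<^sup>2 + b0) + sqrt ((u - u1)\<^sup>2 + b1)"
    using assms(1,2) by (simp add: power2_commute)
  finally show ?thesis by simp
qed

lemma lipschitz_on_cone:
  fixes \<beta> :: real
  assumes "0 \<le> \<beta>"
  shows "1-lipschitz_on UNIV (\<lambda>u. v + sqrt ((u - c)\<^sup>2 + \<beta>))"
proof (rule lipschitz_onI)
  have le: "sqrt ((x - c)\<^sup>2 + \<beta>) \<le> sqrt ((y - c)\<^sup>2 + \<beta>) + \<bar>x - y\<bar>" for x y :: real
    using real_sqrt_sum_squares_triangle_ineq[where a = "y - c" and c = "x - y" and b = "sqrt \<beta>" and d = 0]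
      assms by simp
  show "dist (v + sqrt ((x - c)\<^sup>2 + \<beta>)) (v + sqrt ((y - c)\<^sup>2 + \<beta>)) \<le> 1 * dist x y" for x y
    using le[of x y] le[of y x] by (simp add: dist_real_def abs_le_iff abs_minus_commute)
qed simp

lemma lipschitz_on_INF:
  fixes f :: "'i \<Rightarrow> 'a::metric_space \<Rightarrow> real"
  assumes "I \<noteq> {}" and bdd: "\<And>x. x \<in> U \<Longrightarrow> bdd_below ((\<lambda>i. f i x) ` I)"
    and lip: "\<And>i. i \<in> I \<Longrightarrow> L-lipschitz_on U (f i)"
  shows "L-lipschitz_on U (\<lambda>x. INF i\<in>I. f i x)"
proof (rule lipschitz_onI)
  have le: "(INF i\<in>I. f i x) \<le> (INF i\<in>I. f i y) + L * dist x y" if "x \<in> U" "y \<in> U" for x y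
  proof -
    have "(INF i\<in>I. f i x) - L * dist x y \<le> f i y" if "i \<in> I" for i
      using cINF_lower[OF bdd[OF \<open>x \<in> U\<close>] that] lipschitz_onD[OF lip[OF that] \<open>x \<in> U\<close> \<open>y \<in> U\<close>]
      by (simp add: dist_real_def abs_le_iff)
    then have "(INF i\<in>I. f i x) - L * dist x y \<le> (INF i\<in>I. f i y)"
      by (rule cINF_greatest[OF \<open>I \<noteq> {}\<close>])
    then show ?thesis by simp
  qed
  show "dist (INF i\<in>I. f i x) (INF i\<in>I. f i y) \<le> L * dist x y" if "x \<in> U" "y \<in> U" for x y
    using le[OF that] le[OF that(2,1)] by (simp add: dist_real_def abs_le_iff dist_commute)
  obtain i where "i \<in> I" using \<open>I \<noteq> {}\<close> by blast
  then show "0 \<le> L" using lip lipschitz_on_nonneg by blast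
qed

lemma interpolation_if_cost_le_phi:
  assumes G: "maximal_monotone G"
    and "ereal (cost x0 y0) \<le> phi G y0" "ereal (cost x1 y1) \<le> phi G y1"
    and "0 \<le> t" "t \<le> 1"
  shows "(1 - t) * cost x0 y0 + t * cost x1 y1 \<le> t * (1 - t) * cost y0 y1"
proof -
  obtain g where g: "g \<in> G" "cost g ((1 - t) *\<^sub>R y0 + t *\<^sub>R y1) \<le> 0"
    using maximal_monotone_ex_cost_nonpos[OF G] .
  with assms(2,3) have "cost x0 y0 \<le> cost g y0" "cost x1 y1 \<le> cost g y1"
    by (simp_all add: ereal_le_phi_iff)
  with assms(4,5) have "(1 - t) * cost x0 y0 + t * cost x1 y1 \<le> (1 - t) * cost g y0 + t * cost g y1"
    by (intro add_mono mult_left_mono) auto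
  with g(2) show ?thesis unfolding cost_convex_combination by linarith
qed

lemma ex_maximal_monotone_cost_le_phi:
  fixes A :: "((real \<times> real) \<times> (real \<times> real)) set"
  assumes interpolation: "\<And>x0 y0 x1 y1 t. (x0, y0) \<in> A \<Longrightarrow> (x1, y1) \<in> A \<Longrightarrow> 0 \<le> t \<Longrightarrow> t \<le> 1 \<Longrightarrow>
      (1 - t) * cost x0 y0 + t * cost x1 y1 \<le> t * (1 - t) * cost y0 y1"
  shows "\<exists>G. maximal_monotone G \<and> (\<forall>(x, y)\<in>A. ereal (cost x y) \<le> phi G y)"
proof (cases "A = {}")
  case True
  have "maximal_monotone {g. vcoord g = (\<lambda>_. 0) (ucoord g)}"
    by (rule maximal_monotone_graph) (simp add: lipschitz_on_def)
  with True show ?thesis by blast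
next
  case False
  define upper lower where
    "upper p u = vcoord (snd p) + sqrt ((u - ucoord (snd p))\<^sup>2 - 4 * cost (fst p) (snd p))" and
    "lower p u = vcoord (snd p) - sqrt ((u - ucoord (snd p))\<^sup>2 - 4 * cost (fst p) (snd p))"
    for p :: "(real \<times> real) \<times> (real \<times> real)" and u :: real
  have nonpos: "cost (fst p) (snd p) \<le> 0" if "p \<in> A" for p
    using interpolation[of "fst p" "snd p" "fst p" "snd p" 0] that by simp
  have separation: "lower q u \<le> upper p u" if "p \<in> A" "q \<in> A" for p q u
  proof -
    obtain x0 y0 x1 y1 where pq: "p = (x0, y0)" "q = (x1, y1)" by (cases p, cases q) auto
    have rotated: "- 4 * cost y0 y1 = (vcoord y1 - vcoord y0)\<^sup>2 - (ucoord y1 - ucoord y0)\<^sup>2"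
      by (simp add: cost_rotated power2_commute)
    have bound: "t * (1 - t) * ((vcoord y1 - vcoord y0)\<^sup>2 - (ucoord y1 - ucoord y0)\<^sup>2)
        \<le> (1 - t) * (- 4 * cost x0 y0) + t * (- 4 * cost x1 y1)" if "0 \<le> t" "t \<le> 1" for t
      unfolding rotated[symmetric] using interpolation[of x0 y0 x1 y1 t] \<open>p \<in> A\<close> \<open>q \<in> A\<close> pq that
      by (simp add: algebra_simps)
    have "0 \<le> - 4 * cost x0 y0" "0 \<le> - 4 * cost x1 y1"
      using nonpos \<open>p \<in> A\<close> \<open>q \<in> A\<close> pq by fastforce+
    then have "vcoord y1 - sqrt ((u - ucoord y1)\<^sup>2 + - 4 * cost x1 y1)
        \<le> vcoord y0 + sqrt ((u - ucoord y0)\<^sup>2 + - 4 * cost x0 y0)"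
      using bound by (rule cone_separation)
    then show ?thesis using pq by (simp add: upper_def lower_def)
  qed
  obtain p0 where "p0 \<in> A" using False by auto
  define h where "h u = (INF p\<in>A. upper p u)" for u
  have bdd: "bdd_below ((\<lambda>p. upper p u) ` A)" for u
    using separation[OF _ \<open>p0 \<in> A\<close>] by (intro bdd_belowI2[where m = "lower p0 u"])
  have h_le_upper: "h u \<le> upper p u" if "p \<in> A" for p u
    unfolding h_def using bdd that by (rule cINF_lower)
  have lower_le_h: "lower p u \<le> h u" if "p \<in> A" for p u
    unfolding h_def using separation[OF _ that] by (intro cINF_greatest[OF False])
  have "1-lipschitz_on UNIV (upper p)" if "p \<in> A" for p
    using lipschitz_on_cone[of "- 4 * cost (fst p) (snd p)"] nonpos[OF that]
    by (simp add: upper_def[abs_def])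
  then have "1-lipschitz_on UNIV h"
    unfolding h_def using bdd by (intro lipschitz_on_INF[OF False])
  then have "maximal_monotone {g. vcoord g = h (ucoord g)}" by (rule maximal_monotone_graph)
  moreover have "\<forall>(x, y)\<in>A. ereal (cost x y) \<le> phi {g. vcoord g = h (ucoord g)} y"
  proof (clarsimp simp: ereal_le_phi_iff)
    fix x y g assume "(x, y) \<in> A" "vcoord g = h (ucoord g)"
    then show "cost x y \<le> cost g y"
      using h_le_upper[of "(x, y)" "ucoord g"] lower_le_h[of "(x, y)" "ucoord g"] nonpos[of "(x, y)"]
      by (intro cost_le_cost_if_in_cone) (auto simp: upper_def lower_def)
  qed
  ultimately show ?thesis by blast
qed

theorem lemma6:
  fixes A :: "((real \<times> real) \<times> (real \<times> real)) set"
  shows "(\<forall>(x0, y0)\<in>A. \<forall>(x1, y1)\<in>A. \<forall>t::real. 0 \<le> t \<and> t \<le> 1 \<longrightarrow>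
            (1 - t) * cost x0 y0 + t * cost x1 y1 \<le> t * (1 - t) * cost y0 y1)
         \<longleftrightarrow> (\<exists>G. maximal_monotone G \<and> (\<forall>(x, y)\<in>A. ereal (cost x y) \<le> phi G y))"
proof
  assume "\<forall>(x0, y0)\<in>A. \<forall>(x1, y1)\<in>A. \<forall>t::real. 0 \<le> t \<and> t \<le> 1 \<longrightarrow>
            (1 - t) * cost x0 y0 + t * cost x1 y1 \<le> t * (1 - t) * cost y0 y1"
  then show "\<exists>G. maximal_monotone G \<and> (\<forall>(x, y)\<in>A. ereal (cost x y) \<le> phi G y)"
    by (intro ex_maximal_monotone_cost_le_phi) fast
next
  assume "\<exists>G. maximal_monotone G \<and> (\<forall>(x, y)\<in>A. ereal (cost x y) \<le> phi G y)"
  then show "\<forall>(x0, y0)\<in>A. \<forall>(x1, y1)\<in>A. \<forall>t::real. 0 \<le> t \<and> t \<le> 1 \<longrightarrow>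
            (1 - t) * cost x0 y0 + t * cost x1 y1 \<le> t * (1 - t) * cost y0 y1"
    using interpolation_if_cost_le_phi by fast
qed

end
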